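(* Let $G<\operatorname{Aut}(T)$ be the group generated by the automorphisms $a,b,c$ of the $6$-ary rooted tree $T=\{1,\dots,6\}^*$ defined by the wreath recursions $a=\langle\!\langle b^{-1},1,b,c^{-1},1,c\rangle\!\rangle(13)(25)(46)$, $b=\langle\!\langle b,b^{-1},1,c,c^{-1},1\rangle\!\rangle(2356)$, $c=(123)(456)$. Then $G$ is recurrent; consequently $G$ is level-transitive.
   Context: $T$ is the tree of finite words over $X=\{1,\dots,6\}$, rooted at the empty word, each word $v$ joined to $vx$. Automorphisms act on the right. The wreath recursion $g=\langle\!\langle g_1,\dots,g_6\rangle\!\rangle\sigma$ with $g_i\in\operatorname{Aut}(T)$, $\sigma$ a permutation of $X$, means $(xv)^g=x^\sigma v^{g_x}$ for $x\in X$, $v\in X^*$; $g_x=g|_x$ is the restriction (section) of $g$ at $x$. A self-similar group $G$ is recurrent if it acts transitively on $X$ and, for some (equivalently every) $x\in X$, the map $G_x\to G$, $g\mapsto g|_x$, from the stabilizer $G_x=\{g\in G:x^g=x\}$ is onto. Level-transitive means transitive on $X^n$ for all $n$. (This $G$ is $\operatorname{IMG}(f_1)$ for $f_1(z)=\frac{2(z^2-3/4)^3}{z^2(z^2-9/8)^2}-1$.) *)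

theory Defs
  imports "HOL-Algebra.Bij" "HOL-Algebra.Generated_Groups"
begin

text \<open>Alphabet X = {1,...,6}; Li stands for the letter i.  Vertices of T are words (lists).\<close>
datatype letter = L1 | L2 | L3 | L4 | L5 | L6

datatype gen = Ga | Gb | Gc

text \<open>A section state: trivial, a generator, or the inverse of a generator.\<close>
datatype state = Id | Pos gen | Neg gen

fun sinv :: "state \<Rightarrow> state" where
  "sinv Id = Id" | "sinv (Pos g) = Neg g" | "sinv (Neg g) = Pos g"

fun sigma :: "gen \<Rightarrow> letter \<Rightarrow> letter" where
  "sigma Ga L1 = L3" | "sigma Ga L2 = L5" | "sigma Ga L3 = L1"
| "sigma Ga L4 = L6" | "sigma Ga L5 = L2" | "sigma Ga L6 = L4"
| "sigma Gb L1 = L1" | "sigma Gb L2 = L3" | "sigma Gb L3 = L5"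
| "sigma Gb L4 = L4" | "sigma Gb L5 = L6" | "sigma Gb L6 = L2"
| "sigma Gc L1 = L2" | "sigma Gc L2 = L3" | "sigma Gc L3 = L1"
| "sigma Gc L4 = L5" | "sigma Gc L5 = L6" | "sigma Gc L6 = L4"

fun sect :: "gen \<Rightarrow> letter \<Rightarrow> state" where
  "sect Ga L1 = Neg Gb" | "sect Ga L2 = Id" | "sect Ga L3 = Pos Gb"
| "sect Ga L4 = Neg Gc" | "sect Ga L5 = Id" | "sect Ga L6 = Pos Gc"
| "sect Gb L1 = Pos Gb" | "sect Gb L2 = Neg Gb" | "sect Gb L3 = Id"
| "sect Gb L4 = Pos Gc" | "sect Gb L5 = Neg Gc" | "sect Gb L6 = Id"
| "sect Gc _ = Id"

text \<open>Action of a state on words: (xv)^g = x^sigma v^(g_x); for g^-1 with y = x^(sigma^-1):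
  (xv)^(g^-1) = y v^((g_y)^-1).\<close>
fun act :: "state \<Rightarrow> letter list \<Rightarrow> letter list" where
  "act Id w = w"
| "act (Pos g) [] = []"
| "act (Pos g) (x # v) = sigma g x # act (sect g x) v"
| "act (Neg g) [] = []"
| "act (Neg g) (x # v) = (let y = Hilbert_Choice.inv (sigma g) x in y # act (sinv (sect g y)) v)"

definition autA :: "letter list \<Rightarrow> letter list" where "autA = act (Pos Ga)"
definition autB :: "letter list \<Rightarrow> letter list" where "autB = act (Pos Gb)"
definition autC :: "letter list \<Rightarrow> letter list" where "autC = act (Pos Gc)"

definition Ggrp :: "(letter list \<Rightarrow> letter list) set" where
  "Ggrp = generate (BijGroup (UNIV :: letter list set)) {autA, autB, autC}"

definition restr :: "(letter list \<Rightarrow> letter list) \<Rightarrow> letter \<Rightarrow> (letter list \<Rightarrow> letter list)" where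
  "restr g x = (\<lambda>v. tl (g (x # v)))"

definition recurrent :: "(letter list \<Rightarrow> letter list) set \<Rightarrow> bool" where
  "recurrent H \<longleftrightarrow>
     (\<forall>x y. \<exists>g\<in>H. g [x] = [y]) \<and>
     (\<exists>x. (\<lambda>g. restr g x) ` {g \<in> H. g [x] = [x]} = H)"

definition level_transitive :: "(letter list \<Rightarrow> letter list) set \<Rightarrow> bool" where
  "level_transitive H \<longleftrightarrow>
     (\<forall>n u v. length u = n \<longrightarrow> length v = n \<longrightarrow> (\<exists>g\<in>H. g u = v))"

end

theory Submission
  imports Defs
begin

text \<open>
  The stabiliser of the letter 1 already maps onto G under the section at 1: b fixes 1 with
  section b, and b fixes 4 with section c, so conjugating b and its inverse by an element that
  carries 1v to 4v (such as c \<circ> c \<circ> a \<circ> c) yields elements fixing 1 with sections c and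
  its inverse; finally a = c^-1 \<circ> b^-1 and a^-1 = b \<circ> c. Since a and c act transitively on
  letters, level transitivity then follows from recurrence by induction on the level: move the
  first letter to 1, lift a map between the tails into the stabiliser of 1, and move 1 to the
  target letter.
\<close>

lemma in_Bij_UNIV_iff: "f \<in> Bij UNIV \<longleftrightarrow> bij f"
  by (simp add: Bij_def)

lemma carrier_BijGroup_UNIV: "carrier (BijGroup UNIV) = Bij UNIV"
  by (simp add: BijGroup_def)

lemma mult_BijGroup_UNIV: "f \<in> Bij UNIV \<Longrightarrow> g \<in> Bij UNIV \<Longrightarrow> f \<otimes>\<^bsub>BijGroup UNIV\<^esub> g = f \<circ> g"
  by (simp add: BijGroup_def compose_def fun_eq_iff)

lemma one_BijGroup_UNIV: "\<one>\<^bsub>BijGroup UNIV\<^esub> = id"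
  by (simp add: BijGroup_def fun_eq_iff)

lemma inv_BijGroup_UNIV: "f \<in> Bij UNIV \<Longrightarrow> inv\<^bsub>BijGroup UNIV\<^esub> f = Hilbert_Choice.inv f"
  by (simp add: inv_BijGroup restrict_UNIV)

context
  fixes H :: "('a \<Rightarrow> 'a) set"
  assumes H: "subgroup H (BijGroup UNIV)"
begin

lemma subgroup_BijGroup_bij: "g \<in> H \<Longrightarrow> bij g"
  using subgroup.subset[OF H] by (auto simp: carrier_BijGroup_UNIV in_Bij_UNIV_iff)

lemma subgroup_BijGroup_id: "id \<in> H"
  using subgroup.one_closed[OF H] by (simp add: one_BijGroup_UNIV)

lemma subgroup_BijGroup_comp: "f \<in> H \<Longrightarrow> g \<in> H \<Longrightarrow> f \<circ> g \<in> H"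
  using subgroup.m_closed[OF H, of f g] subgroup_BijGroup_bij
  by (simp add: mult_BijGroup_UNIV in_Bij_UNIV_iff)

lemma subgroup_BijGroup_inv: "g \<in> H \<Longrightarrow> Hilbert_Choice.inv g \<in> H"
  using subgroup.m_inv_closed[OF H, of g] subgroup_BijGroup_bij
  by (simp add: inv_BijGroup_UNIV in_Bij_UNIV_iff)

lemma subgroup_BijGroup_orbit_trans:
  assumes "\<exists>g\<in>H. g a = b" and "\<exists>g\<in>H. g a = c"
  shows "\<exists>g\<in>H. g b = c"
proof -
  from assms obtain g h where g: "g \<in> H" "g a = b" and h: "h \<in> H" "h a = c" by blast
  have "Hilbert_Choice.inv g b = a"
    using g subgroup_BijGroup_bij[OF g(1)] by (metis bij_is_inj inv_f_f)
  then have "(h \<circ> Hilbert_Choice.inv g) b = c"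
    using h by simp
  then show ?thesis
    using subgroup_BijGroup_comp[OF h(1) subgroup_BijGroup_inv[OF g(1)]] by blast
qed

end

section \<open>Tree maps and their sections\<close>

text \<open>Together with closure under sections (\<open>self_similar\<close>), this says a map is a tree endomorphism.\<close>

definition tree_map :: "(letter list \<Rightarrow> letter list) \<Rightarrow> bool" where
  "tree_map g \<longleftrightarrow> (\<forall>w. length (g w) = length w) \<and> (\<forall>x v. hd (g (x # v)) = hd (g [x]))"

definition self_similar :: "(letter list \<Rightarrow> letter list) set \<Rightarrow> bool" where
  "self_similar H \<longleftrightarrow> (\<forall>g\<in>H. tree_map g \<and> (\<forall>x. restr g x \<in> H))"

definition stab_sections ::
    "(letter list \<Rightarrow> letter list) set \<Rightarrow> letter \<Rightarrow> (letter list \<Rightarrow> letter list) set" where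
  "stab_sections H x = (\<lambda>g. restr g x) ` {g \<in> H. g [x] = [x]}"

lemma recurrent_iff_stab_sections:
  "recurrent H \<longleftrightarrow> (\<forall>x y. \<exists>g\<in>H. g [x] = [y]) \<and> (\<exists>x. stab_sections H x = H)"
  by (simp add: recurrent_def stab_sections_def)

lemma stab_sectionsI: "k \<in> H \<Longrightarrow> k [x] = [x] \<Longrightarrow> restr k x = g \<Longrightarrow> g \<in> stab_sections H x"
  unfolding stab_sections_def by blast

lemma tree_map_length: "tree_map g \<Longrightarrow> length (g w) = length w"
  unfolding tree_map_def by blast

lemma tree_map_hd: "tree_map g \<Longrightarrow> hd (g (x # v)) = hd (g [x])"
  unfolding tree_map_def by blast

lemma tree_map_singleton:
  assumes "tree_map g"
  shows "\<exists>y. g [x] = [y]"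
proof -
  have "length (g [x]) = Suc 0" using tree_map_length[OF assms] by simp
  then show ?thesis by (auto simp: length_Suc_conv)
qed

lemma tree_map_Cons:
  assumes g: "tree_map g" and x: "g [x] = [y]"
  shows "g (x # v) = y # restr g x v"
proof -
  have "g (x # v) \<noteq> []" using tree_map_length[OF g, of "x # v"] by auto
  moreover have "hd (g (x # v)) = y" using tree_map_hd[OF g, of x v] x by simp
  ultimately show ?thesis unfolding restr_def by (metis list.collapse)
qed

lemma length_restr: "tree_map g \<Longrightarrow> length (restr g x v) = length v"
  by (simp add: restr_def tree_map_length)

lemma restr_comp:
  assumes "tree_map g" and "g [x] = [y]"
  shows "restr (f \<circ> g) x = restr f y \<circ> restr g x"
proof
  fix v
  have "restr (f \<circ> g) x v = tl (f (y # restr g x v))"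
    using tree_map_Cons[OF assms] by (simp add: restr_def[of "f \<circ> g"])
  then show "restr (f \<circ> g) x v = (restr f y \<circ> restr g x) v"
    by (simp add: restr_def[of f])
qed

lemma tree_map_comp:
  assumes f: "tree_map f" and g: "tree_map g"
  shows "tree_map (f \<circ> g)"
  unfolding tree_map_def
proof (intro conjI allI)
  show "length ((f \<circ> g) w) = length w" for w
    by (simp add: tree_map_length[OF f] tree_map_length[OF g])
  show "hd ((f \<circ> g) (x # v)) = hd ((f \<circ> g) [x])" for x v
  proof -
    obtain y where y: "g [x] = [y]" using tree_map_singleton[OF g] by blast
    then show ?thesis using tree_map_Cons[OF g y, of v] tree_map_hd[OF f, of y "restr g x v"] by simp
  qed
qed

context
  fixes H :: "(letter list \<Rightarrow> letter list) set"
  assumes H: "subgroup H (BijGroup UNIV)" and self_similar: "self_similar H"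
begin

lemma stab_sections_comp:
  assumes "f \<in> stab_sections H x" and "g \<in> stab_sections H x"
  shows "f \<circ> g \<in> stab_sections H x"
proof -
  from assms obtain k l where k: "k \<in> H" "k [x] = [x]" "restr k x = f"
    and l: "l \<in> H" "l [x] = [x]" "restr l x = g"
    unfolding stab_sections_def by blast
  have "restr (k \<circ> l) x = f \<circ> g"
    using restr_comp[of l x x k] self_similar l k by (simp add: self_similar_def)
  then show ?thesis
    using subgroup_BijGroup_comp[OF H k(1) l(1)] k l by (intro stab_sectionsI) auto
qed

lemma recurrent_imp_level_transitive:
  assumes "recurrent H"
  shows "level_transitive H"
proof -
  obtain x\<^sub>0 where lift: "stab_sections H x\<^sub>0 = H" and letters: "\<And>x y. \<exists>g\<in>H. g [x] = [y]"
    using assms unfolding recurrent_iff_stab_sections by blast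
  have "\<exists>g\<in>H. g u = v" if "length u = n" "length v = n" for n u v
    using that
  proof (induction n arbitrary: u v)
    case 0
    then show ?case using subgroup_BijGroup_id[OF H] by (intro bexI[of _ id]) simp_all
  next
    case (Suc n)
    then obtain x u' y v' where u: "u = x # u'" "length u' = n" and v: "v = y # v'" "length v' = n"
      by (metis length_Suc_conv)
    obtain h where h: "h \<in> H" "h [x] = [x\<^sub>0]" using letters by blast
    obtain g where g: "g \<in> H" "g [x\<^sub>0] = [y]" using letters by blast
    have h_tree: "tree_map h" and g_tree: "tree_map g" and "restr g x\<^sub>0 \<in> H"
      using self_similar g h by (auto simp: self_similar_def)
    then obtain z where z: "restr g x\<^sub>0 z = v'"
      using subgroup_BijGroup_bij[OF H] by (metis bij_is_surj surjD)
    have "length z = n"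
      using z v length_restr[OF g_tree, of x\<^sub>0 z] by simp
    moreover have "length (restr h x u') = n"
      using u length_restr[OF h_tree] by simp
    ultimately obtain g\<^sub>0 where g\<^sub>0: "g\<^sub>0 \<in> H" "g\<^sub>0 (restr h x u') = z"
      using Suc.IH by blast
    then have "g\<^sub>0 \<in> stab_sections H x\<^sub>0"
      using lift by simp
    then obtain k where k: "k \<in> H" "k [x\<^sub>0] = [x\<^sub>0]" "restr k x\<^sub>0 = g\<^sub>0"
      unfolding stab_sections_def by blast
    then have k_tree: "tree_map k" using self_similar by (simp add: self_similar_def)
    have "(g \<circ> k \<circ> h) u = g (k (x\<^sub>0 # restr h x u'))"
      using u tree_map_Cons[OF h_tree h(2)] by simp
    also have "\<dots> = g (x\<^sub>0 # z)"
      using tree_map_Cons[OF k_tree k(2)] k(3) g\<^sub>0(2) by simp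
    also have "\<dots> = v"
      using tree_map_Cons[OF g_tree g(2)] z v by simp
    finally have "(g \<circ> k \<circ> h) u = v" .
    then show ?case
      using subgroup_BijGroup_comp[OF H subgroup_BijGroup_comp[OF H g(1) k(1)] h(1)] by blast
  qed
  then show ?thesis unfolding level_transitive_def by blast
qed

end

section \<open>The automaton generating G\<close>

fun siginv :: "gen \<Rightarrow> letter \<Rightarrow> letter" where
  "siginv Ga L1 = L3" | "siginv Ga L2 = L5" | "siginv Ga L3 = L1"
| "siginv Ga L4 = L6" | "siginv Ga L5 = L2" | "siginv Ga L6 = L4"
| "siginv Gb L1 = L1" | "siginv Gb L2 = L6" | "siginv Gb L3 = L2"
| "siginv Gb L4 = L4" | "siginv Gb L5 = L3" | "siginv Gb L6 = L5"
| "siginv Gc L1 = L3" | "siginv Gc L2 = L1" | "siginv Gc L3 = L2"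
| "siginv Gc L4 = L6" | "siginv Gc L5 = L4" | "siginv Gc L6 = L5"

lemma sigma_siginv [simp]: "sigma g (siginv g x) = x"
  by (cases g; cases x; simp)

lemma siginv_sigma [simp]: "siginv g (sigma g x) = x"
  by (cases g; cases x; simp)

lemma inv_sigma [simp]: "Hilbert_Choice.inv (sigma g) = siginv g"
  by (rule inv_equality) simp_all

lemma sinv_sinv [simp]: "sinv (sinv s) = s"
  by (cases s) simp_all

lemma act_Neg_Cons [simp]:
  "act (Neg g) (x # v) = siginv g x # act (sinv (sect g (siginv g x))) v"
  by (simp add: Let_def)

declare act.simps(5) [simp del]

lemma act_Id [simp]: "act Id = id"
  by (simp add: fun_eq_iff)

lemma length_act [simp]: "length (act s w) = length w"
  by (induction w arbitrary: s) (case_tac s; simp)+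

lemma act_sinv_cancel [simp]: "act s (act (sinv s) w) = w"
proof (induction w arbitrary: s)
  case Nil
  then show ?case by (cases s) simp_all
next
  case (Cons x v)
  then show ?case by (cases s) (simp_all add: Cons[of "sinv (sect _ x)", simplified])
qed

lemma act_sinv_cancel' [simp]: "act (sinv s) (act s w) = w"
  using act_sinv_cancel[of "sinv s" w] by simp

lemma act_in_carrier: "act s \<in> carrier (BijGroup UNIV)"
  by (auto simp: carrier_BijGroup_UNIV in_Bij_UNIV_iff
      intro: bij_betw_byWitness[where f' = "act (sinv s)"])

lemma inv_act_Pos: "inv\<^bsub>BijGroup UNIV\<^esub> (act (Pos g)) = act (Neg g)"
proof (rule group.inv_equality[OF group_BijGroup])
  show "act (Neg g) \<otimes>\<^bsub>BijGroup UNIV\<^esub> act (Pos g) = \<one>\<^bsub>BijGroup UNIV\<^esub>"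
    using act_in_carrier[of "Pos g"] act_in_carrier[of "Neg g"] act_sinv_cancel'[of "Pos g"]
    by (simp add: mult_BijGroup_UNIV carrier_BijGroup_UNIV one_BijGroup_UNIV fun_eq_iff
        del: act_sinv_cancel')
qed (simp_all add: act_in_carrier)

lemma subgroup_Ggrp: "subgroup Ggrp (BijGroup UNIV)"
  unfolding Ggrp_def
  by (rule group.generate_is_subgroup[OF group_BijGroup])
    (simp add: autA_def autB_def autC_def act_in_carrier)

lemma act_in_Ggrp: "act s \<in> Ggrp"
proof (cases s)
  case Id
  then show ?thesis using subgroup_BijGroup_id[OF subgroup_Ggrp] by simp
next
  case (Pos g)
  then show ?thesis unfolding Ggrp_def
    by (cases g) (auto intro: generate.incl simp: autA_def autB_def autC_def)
next
  case (Neg g)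
  have "inv\<^bsub>BijGroup UNIV\<^esub> (act (Pos g)) \<in> Ggrp" unfolding Ggrp_def
    by (cases g) (auto intro!: generate.inv simp: autA_def autB_def autC_def)
  then show ?thesis using Neg inv_act_Pos by simp
qed

lemmas comp_in_Ggrp = subgroup_BijGroup_comp[OF subgroup_Ggrp]

lemma Ggrp_induct [consumes 1, case_names act comp]:
  assumes "g \<in> Ggrp"
    and act: "\<And>s. P (act s)"
    and comp: "\<And>f h. f \<in> Ggrp \<Longrightarrow> h \<in> Ggrp \<Longrightarrow> P f \<Longrightarrow> P h \<Longrightarrow> P (f \<circ> h)"
  shows "P g"
  using assms(1) unfolding Ggrp_def
proof (induction rule: generate.induct)
  case one
  then show ?case using act[of Id] by (simp add: one_BijGroup_UNIV id_def)
next
  case (incl h)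
  then show ?case using act by (auto simp: autA_def autB_def autC_def)
next
  case (inv h)
  then show ?case using act inv_act_Pos by (auto simp: autA_def autB_def autC_def)
next
  case (eng h\<^sub>1 h\<^sub>2)
  then have "h\<^sub>1 \<otimes>\<^bsub>BijGroup UNIV\<^esub> h\<^sub>2 = h\<^sub>1 \<circ> h\<^sub>2"
    using subgroup.subset[OF subgroup_Ggrp]
    by (intro mult_BijGroup_UNIV) (auto simp: Ggrp_def carrier_BijGroup_UNIV)
  then show ?case
    using eng comp[of h\<^sub>1 h\<^sub>2] by (simp only: Ggrp_def)
qed

lemma tree_map_act: "tree_map (act s)"
  unfolding tree_map_def by (cases s) auto

lemma restr_id [simp]: "restr id x = id"
  by (simp add: restr_def fun_eq_iff)

lemma restr_act_Pos [simp]: "restr (act (Pos g)) x = act (sect g x)"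
  by (simp add: restr_def fun_eq_iff)

lemma restr_act_Neg [simp]: "restr (act (Neg g)) x = act (sinv (sect g (siginv g x)))"
  by (simp add: restr_def fun_eq_iff)

lemma restr_act_in_Ggrp: "restr (act s) x \<in> Ggrp"
  using act_in_Ggrp[of Id] act_in_Ggrp by (cases s) simp_all

lemma self_similar_Ggrp: "self_similar Ggrp"
proof -
  have "tree_map g \<and> (\<forall>x. restr g x \<in> Ggrp)" if "g \<in> Ggrp" for g
    using that
  proof (induction rule: Ggrp_induct)
    case (act s)
    show ?case using tree_map_act restr_act_in_Ggrp by blast
  next
    case (comp f h)
    then have f: "tree_map f" "\<And>y. restr f y \<in> Ggrp" and h: "tree_map h" "\<And>x. restr h x \<in> Ggrp"
      by simp_all
    have "restr (f \<circ> h) x \<in> Ggrp" for x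
    proof -
      obtain y where "h [x] = [y]" using tree_map_singleton[OF h(1)] by blast
      then show ?thesis using restr_comp[OF h(1)] comp_in_Ggrp f(2) h(2) by simp
    qed
    then show ?case using tree_map_comp[OF f(1) h(1)] by blast
  qed
  then show ?thesis unfolding self_similar_def by blast
qed

section \<open>Recurrence of G\<close>

lemma act_Pos_Ga_eq: "act (Pos Ga) = act (Neg Gc) \<circ> act (Neg Gb)"
proof (rule ext)
  fix w show "act (Pos Ga) w = (act (Neg Gc) \<circ> act (Neg Gb)) w"
    by (cases w; simp; case_tac a; simp)
qed

lemma act_Neg_Ga_eq: "act (Neg Ga) = act (Pos Gb) \<circ> act (Pos Gc)"
proof (rule ext)
  fix w show "act (Neg Ga) w = (act (Pos Gb) \<circ> act (Pos Gc)) w"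
    by (cases w; simp; case_tac a; simp)
qed

lemma orbit_L1: "\<exists>g\<in>Ggrp. g [L1] = [y]"
proof -
  let ?a = "act (Pos Ga)" and ?c = "act (Pos Gc)"
  show ?thesis
  proof (cases y)
    case L1 then show ?thesis using act_in_Ggrp[of Id] by (intro bexI[of _ id]) simp_all
  next
    case L2 then show ?thesis by (intro bexI[of _ ?c]) (simp_all add: act_in_Ggrp)
  next
    case L3 then show ?thesis by (intro bexI[of _ "?c \<circ> ?c"]) (simp_all add: comp_in_Ggrp act_in_Ggrp)
  next
    case L4 then show ?thesis
      by (intro bexI[of _ "?c \<circ> ?c \<circ> ?a \<circ> ?c"]) (simp_all add: comp_in_Ggrp act_in_Ggrp)
  next
    case L5 then show ?thesis by (intro bexI[of _ "?a \<circ> ?c"]) (simp_all add: comp_in_Ggrp act_in_Ggrp)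
  next
    case L6 then show ?thesis
      by (intro bexI[of _ "?c \<circ> ?a \<circ> ?c"]) (simp_all add: comp_in_Ggrp act_in_Ggrp)
  qed
qed

lemma Ggrp_transitive_letters: "\<exists>g\<in>Ggrp. g [x] = [y]"
  by (rule subgroup_BijGroup_orbit_trans[OF subgroup_Ggrp orbit_L1 orbit_L1])

definition move_1_to_4 :: "letter list \<Rightarrow> letter list" where
  "move_1_to_4 = act (Pos Gc) \<circ> act (Pos Gc) \<circ> act (Pos Ga) \<circ> act (Pos Gc)"

definition move_4_to_1 :: "letter list \<Rightarrow> letter list" where
  "move_4_to_1 = act (Neg Gc) \<circ> act (Neg Ga) \<circ> act (Neg Gc) \<circ> act (Neg Gc)"

lemma act_Pos_Gc_in_stab_sections: "act (Pos Gc) \<in> stab_sections Ggrp L1"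
  by (rule stab_sectionsI[where k = "move_4_to_1 \<circ> act (Pos Gb) \<circ> move_1_to_4"])
    (simp_all add: move_1_to_4_def move_4_to_1_def comp_in_Ggrp act_in_Ggrp restr_def fun_eq_iff)

lemma act_Neg_Gc_in_stab_sections: "act (Neg Gc) \<in> stab_sections Ggrp L1"
  by (rule stab_sectionsI[where k = "move_4_to_1 \<circ> act (Neg Gb) \<circ> move_1_to_4"])
    (simp_all add: move_1_to_4_def move_4_to_1_def comp_in_Ggrp act_in_Ggrp restr_def fun_eq_iff)

lemma act_in_stab_sections: "act s \<in> stab_sections Ggrp L1"
proof -
  have act_Gb: "act (Pos Gb) \<in> stab_sections Ggrp L1" "act (Neg Gb) \<in> stab_sections Ggrp L1"
    by (rule stab_sectionsI[OF act_in_Ggrp[of "Pos Gb"]] stab_sectionsI[OF act_in_Ggrp[of "Neg Gb"]];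
        simp)+
  note comp = stab_sections_comp[OF subgroup_Ggrp self_similar_Ggrp]
  show ?thesis
  proof (cases s)
    case Id
    show ?thesis unfolding Id by (rule stab_sectionsI[OF act_in_Ggrp[of Id]]) simp_all
  next
    case (Pos g)
    then show ?thesis
      using act_Gb act_Pos_Gc_in_stab_sections comp[OF act_Neg_Gc_in_stab_sections act_Gb(2)]
      by (cases g) (simp_all add: act_Pos_Ga_eq)
  next
    case (Neg g)
    then show ?thesis
      using act_Gb act_Neg_Gc_in_stab_sections comp[OF act_Gb(1) act_Pos_Gc_in_stab_sections]
      by (cases g) (simp_all add: act_Neg_Ga_eq)
  qed
qed

lemma stab_sections_Ggrp: "stab_sections Ggrp L1 = Ggrp"
proof
  show "stab_sections Ggrp L1 \<subseteq> Ggrp"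
    using self_similar_Ggrp unfolding stab_sections_def self_similar_def by blast
  show "Ggrp \<subseteq> stab_sections Ggrp L1"
  proof
    fix g assume "g \<in> Ggrp"
    then show "g \<in> stab_sections Ggrp L1"
      by (induction rule: Ggrp_induct)
        (metis act_in_stab_sections, metis stab_sections_comp[OF subgroup_Ggrp self_similar_Ggrp])
  qed
qed

theorem lemma11p5:
  shows "recurrent Ggrp \<and> level_transitive Ggrp"
proof
  show "recurrent Ggrp"
    using Ggrp_transitive_letters stab_sections_Ggrp by (auto simp: recurrent_iff_stab_sections)
  then show "level_transitive Ggrp"
    by (rule recurrent_imp_level_transitive[OF subgroup_Ggrp self_similar_Ggrp])
qed

end
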